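(* Let $d\ge 1$ be an integer, let $\sigma>0$, and let $R_N(u)=\frac{\sigma}{4}\int_{\mathbb{T}^d} :\! u_N^4\!:\,dx$ (the renormalized quartic potential energy described in the context). Then, for any $K>0$, \[ \sup_{N\in\mathbb{N}}\mathbb{E}_\mu\big[e^{R_N(u)}\big]\ \ge\ \sup_{N\in\mathbb{N}}\mathbb{E}_\mu\Big[\mathbf 1_{\{\int_{\mathbb{T}^d}:u_N^2:\,dx\le K\}}e^{R_N(u)}\Big]\ \ge\ \sup_{N\in\mathbb{N}}\mathbb{E}_\mu\Big[\mathbf 1_{\{|\int_{\mathbb{T}^d}:u_N^2:\,dx|\le K\}}e^{R_N(u)}\Big]=\infty . \] In particular, the focusing quartic Gibbs measure $Z^{-1}e^{R(u)}d\mu$, even with a Wick-ordered $L^2$-cutoff, cannot be defined as a probability measure.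
   Context: $\mathbb{T}^d=(\mathbb{R}/2\pi\mathbb{Z})^d$ is equipped with the normalized Lebesgue measure $dx=(2\pi)^{-d}dx_{\mathrm{Leb}}$; $e_n(x)=e^{in\cdot x}$, $\langle n\rangle=(1+|n|^2)^{1/2}$. The log-correlated Gaussian field $\mu$ is the law of the random distribution $u=\sum_{n\in\mathbb{Z}^d}\langle n\rangle^{-d/2}g_n e_n$, where $\{g_n\}_{n\in\mathbb{Z}^d}$ are independent standard complex Gaussian random variables conditioned on $g_{-n}=\overline{g_n}$ (so $g_0$ is a standard real Gaussian); formally $d\mu=Z^{-1}e^{-\frac12\|u\|_{H^{d/2}}^2}du$. For $N\in\mathbb{N}$, $\pi_N f=\sum_{|n|\le N}\widehat f(n)e_n$ and $u_N=\pi_N u$. Set $\sigma_N=\mathbb{E}[u_N(x)^2]=\sum_{|n|\le N}\langle n\rangle^{-d}$ (independent of $x$). Wick powers are $:\!u_N^k\!:\,=H_k(u_N;\sigma_N)$, where $H_k(x;s)$ are the Hermite polynomials with variance parameter $s$, defined by $e^{tx-\frac12 s t^2}=\sum_{k\ge0}\frac{t^k}{k!}H_k(x;s)$; in particular $:\!u_N^2\!:\,=u_N^2-\sigma_N$ and $:\!u_N^4\!:\,=u_N^4-6\sigma_N u_N^2+3\sigma_N^2$. *)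

theory Defs
  imports "HOL-Probability.Probability"
begin

text \<open>Frequencies n in Z^d are vectors int^'d; the dimension d = CARD('d) >= 1.\<close>

definition freq_norm :: "int ^ ('d::finite) \<Rightarrow> real" where
  "freq_norm n = norm (\<chi> i. real_of_int (n $ i))"

definition japanese :: "int ^ ('d::finite) \<Rightarrow> real" where
  "japanese n = sqrt (1 + (freq_norm n)\<^sup>2)"

definition pair_freq :: "int ^ 'd \<Rightarrow> real ^ 'd \<Rightarrow> real" where
  "pair_freq n x = (\<Sum>i\<in>UNIV. real_of_int (n $ i) * x $ i)"

definition e_n :: "int ^ 'd \<Rightarrow> real ^ 'd \<Rightarrow> complex" where
  "e_n n x = cis (pair_freq n x)"

definition gauss_space :: "(int ^ 'd \<Rightarrow> real) measure" where
  "gauss_space = PiM UNIV (\<lambda>_. density lborel std_normal_density)"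

text \<open>g_n = ((1+i) xi_n + (1-i) xi_{-n}) / 2: independent standard complex Gaussians
  conditioned on g_{-n} = conj g_n, with g_0 = xi_0 standard real.\<close>
definition gcoef :: "(int ^ 'd \<Rightarrow> real) \<Rightarrow> int ^ 'd \<Rightarrow> complex" where
  "gcoef \<xi> n = ((1 + \<i>) * complex_of_real (\<xi> n) + (1 - \<i>) * complex_of_real (\<xi> (- n))) / 2"

definition freq_ball :: "nat \<Rightarrow> (int ^ 'd) set" where
  "freq_ball N = {n. freq_norm n \<le> real N}"

text \<open>u_N = pi_N u = sum_{|n|<=N} <n>^{-d/2} g_n e_n (real-valued; we take Re).\<close>
definition uN :: "nat \<Rightarrow> (int ^ 'd \<Rightarrow> real) \<Rightarrow> real ^ 'd \<Rightarrow> real" where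
  "uN N \<xi> x = Re (\<Sum>n\<in>freq_ball N.
      complex_of_real (japanese n powr (- real CARD('d) / 2)) * gcoef \<xi> n * e_n n x)"

definition sigmaN :: "'d::finite itself \<Rightarrow> nat \<Rightarrow> real" where
  "sigmaN _ N = (\<Sum>n\<in>(freq_ball N :: (int ^ 'd) set). japanese n powr (- real CARD('d)))"

definition wick2 :: "'d::finite itself \<Rightarrow> nat \<Rightarrow> (int ^ 'd \<Rightarrow> real) \<Rightarrow> real ^ 'd \<Rightarrow> real" where
  "wick2 T N \<xi> x = (uN N \<xi> x)\<^sup>2 - sigmaN T N"

definition wick4 :: "'d::finite itself \<Rightarrow> nat \<Rightarrow> (int ^ 'd \<Rightarrow> real) \<Rightarrow> real ^ 'd \<Rightarrow> real" where
  "wick4 T N \<xi> x = (uN N \<xi> x) ^ 4 - 6 * sigmaN T N * (uN N \<xi> x)\<^sup>2 + 3 * (sigmaN T N)\<^sup>2"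

definition torus_integral :: "(real ^ 'd \<Rightarrow> real) \<Rightarrow> real" where
  "torus_integral f = (LINT x : cbox 0 (\<chi> i. 2 * pi) | lborel. f x) / (2 * pi) ^ CARD('d)"

definition RN :: "real \<Rightarrow> 'd itself \<Rightarrow> nat \<Rightarrow> (int ^ 'd \<Rightarrow> real) \<Rightarrow> real" where
  "RN \<sigma> T N \<xi> = \<sigma> / 4 * torus_integral (wick4 T N \<xi>)"

end

theory Submission
  imports Defs
begin

text \<open>
  Pairing \<open>n\<close> with \<open>-n\<close> writes \<open>u\<^sub>N = \<Sum>\<^bsub>|n|\<le>N\<^esub> \<langle>n\<rangle>\<^sup>-\<^sup>d\<^sup>/\<^sup>2 \<xi>\<^sub>n (cos (n\<cdot>x) - sin (n\<cdot>x))\<close> with i.i.d.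
  standard Gaussians \<open>\<xi>\<^sub>n\<close> and orthogonal modes. Let \<open>M \<approx> N\<^sup>d\<close> be the number of frequencies,
  \<open>c = \<surd>(\<sigma>\<^sub>N / M)\<close> and \<open>\<eta> = min 1 (K / 3\<sigma>\<^sub>N)\<close>, and consider the event that
  \<open>c \<le> \<langle>n\<rangle>\<^sup>-\<^sup>d\<^sup>/\<^sup>2 \<xi>\<^sub>n \<le> c + \<eta> \<langle>n\<rangle>\<^sup>-\<^sup>d\<^sup>/\<^sup>2\<close> for all \<open>|n| \<le> N\<close>. By Parseval, \<open>\<integral> :u\<^sub>N\<^sup>2: \<in> [0, K]\<close> there, and
  since all modes are \<open>\<ge> 1/2\<close> on a box of side \<open>\<approx> 1/N\<close>, \<open>u\<^sub>N \<ge> M c / 2\<close> on it, so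
  \<open>R\<^sub>N \<ge> C\<^sup>-\<^sup>1 N\<^sup>d \<sigma>\<^sub>N\<^sup>2 - O(\<sigma>\<^sub>N\<^sup>2)\<close>. The event has probability \<open>\<ge> exp (- O(N\<^sup>d \<sigma>\<^sub>N))\<close>, and
  \<open>\<sigma>\<^sub>N \<approx> log N \<rightarrow> \<infinity>\<close>, so the quartic gain wins and the expectations grow at least like \<open>e\<^sup>N\<close>.
\<close>

section \<open>Frequency lattice\<close>

lemma freq_norm_uminus [simp]: "freq_norm (- n) = freq_norm n"
proof -
  have "(\<chi> i. real_of_int ((- n) $ i)) = - (\<chi> i. real_of_int (n $ i))"
    by (simp add: vec_eq_iff)
  then show ?thesis unfolding freq_norm_def by (simp only: norm_minus_cancel)
qed

lemma freq_norm_zero [simp]: "freq_norm 0 = 0"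
  by (simp add: freq_norm_def vec_eq_iff zero_vec_def)

lemma abs_component_le_freq_norm: "\<bar>real_of_int (n $ i)\<bar> \<le> freq_norm n"
  unfolding freq_norm_def using component_le_norm_cart[of "\<chi> i. real_of_int (n $ i)" i] by simp

lemma freq_norm_le_sum_abs: "freq_norm n \<le> (\<Sum>i\<in>UNIV. \<bar>real_of_int (n $ i)\<bar>)"
  unfolding freq_norm_def using norm_le_l1_cart[of "\<chi> i. real_of_int (n $ i)"] by simp

lemma japanese_ge_1: "japanese n \<ge> 1"
  unfolding japanese_def by simp

lemma japanese_pos: "japanese n > 0"
  using japanese_ge_1[of n] by linarith

lemma japanese_uminus [simp]: "japanese (- n) = japanese n"
  unfolding japanese_def by simp

lemma japanese_le_1_plus_freq_norm: "japanese n \<le> 1 + freq_norm n"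
proof -
  have "0 \<le> freq_norm n" by (simp add: freq_norm_def)
  then have "1 + (freq_norm n)\<^sup>2 \<le> (1 + freq_norm n)\<^sup>2"
    by (simp add: power2_eq_square algebra_simps)
  then show ?thesis
    unfolding japanese_def using \<open>0 \<le> freq_norm n\<close> real_le_lsqrt by fastforce
qed

lemma pair_freq_add: "pair_freq (n + m) x = pair_freq n x + pair_freq m x"
  unfolding pair_freq_def by (simp add: algebra_simps sum.distrib)

lemma pair_freq_uminus: "pair_freq (- n) x = - pair_freq n x"
  unfolding pair_freq_def by (simp add: sum_negf)

lemma pair_freq_diff: "pair_freq (n - m) x = pair_freq n x - pair_freq m x"
  unfolding pair_freq_def by (simp add: algebra_simps sum_subtractf)

lemma pair_freq_zero [simp]: "pair_freq 0 x = 0"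
  unfolding pair_freq_def by simp

lemma continuous_on_pair_freq [continuous_intros]: "continuous_on S (pair_freq n)"
  unfolding pair_freq_def by (intro continuous_intros)

definition freq_cube :: "nat \<Rightarrow> (int ^ 'd::finite) set" where
  "freq_cube m = {n. \<forall>i. \<bar>n $ i\<bar> \<le> int m}"

lemma freq_cube_eq_image:
  "freq_cube m = vec_lambda ` (PiE UNIV (\<lambda>_. {- int m..int m}))"
proof (rule set_eqI, rule iffI)
  fix n :: "int ^ 'd"
  assume "n \<in> freq_cube m"
  then have "vec_nth n \<in> PiE UNIV (\<lambda>_. {- int m..int m})"
    by (auto simp: freq_cube_def PiE_iff abs_le_iff minus_le_iff)
  then show "n \<in> vec_lambda ` (PiE UNIV (\<lambda>_. {- int m..int m}))"
    by (metis image_eqI vec_nth_inverse)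
qed (auto simp: freq_cube_def PiE_iff abs_le_iff minus_le_iff)

lemma finite_freq_cube: "finite (freq_cube m)"
  unfolding freq_cube_eq_image by (intro finite_imageI finite_PiE) auto

lemma card_freq_cube: "card (freq_cube m :: (int ^ 'd::finite) set) = (2 * m + 1) ^ CARD('d)"
proof -
  have "inj_on (vec_lambda :: ('d \<Rightarrow> int) \<Rightarrow> int ^ 'd) (PiE UNIV (\<lambda>_. {- int m..int m}))"
    by (auto simp: inj_on_def vec_lambda_inject)
  then have "card (freq_cube m :: (int ^ 'd) set) = card (PiE (UNIV :: 'd set) (\<lambda>_. {- int m..int m}))"
    unfolding freq_cube_eq_image by (rule card_image)
  also have "\<dots> = (2 * m + 1) ^ CARD('d)"
    by (simp add: card_PiE nat_add_distrib nat_mult_distrib)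
  finally show ?thesis .
qed

lemma freq_cube_mono: "m \<le> m' \<Longrightarrow> freq_cube m \<subseteq> freq_cube m'"
proof
  fix n :: "int ^ 'd" assume m: "m \<le> m'" and "n \<in> freq_cube m"
  then have h: "\<bar>n $ i\<bar> \<le> int m" for i by (simp add: freq_cube_def)
  have "\<bar>n $ i\<bar> \<le> int m'" for i using h[of i] m by linarith
  then show "n \<in> freq_cube m'" by (simp add: freq_cube_def)
qed

lemma freq_norm_le_if_mem_freq_cube:
  assumes "n \<in> freq_cube m"
  shows "freq_norm (n :: int ^ 'd::finite) \<le> real CARD('d) * real m"
proof -
  have h: "\<bar>n $ i\<bar> \<le> int m" for i using assms by (simp add: freq_cube_def)
  have "\<bar>real_of_int (n $ i)\<bar> \<le> real m" for i using h[of i] by linarith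
  then have "(\<Sum>i\<in>UNIV. \<bar>real_of_int (n $ i)\<bar>) \<le> (\<Sum>i\<in>(UNIV::'d set). real m)"
    by (intro sum_mono)
  then show ?thesis using freq_norm_le_sum_abs[of n] by simp
qed

lemma freq_ball_subset_freq_cube: "freq_ball N \<subseteq> freq_cube N"
proof
  fix n :: "int ^ 'd" assume "n \<in> freq_ball N"
  then have h: "\<bar>real_of_int (n $ i)\<bar> \<le> real N" for i
    using abs_component_le_freq_norm[of n i] by (simp add: freq_ball_def)
  have "\<bar>n $ i\<bar> \<le> int N" for i using h[of i] by linarith
  then show "n \<in> freq_cube N" unfolding freq_cube_def by simp
qed

lemma freq_cube_subset_freq_ball:
  "CARD('d) * m \<le> N \<Longrightarrow> (freq_cube m :: (int ^ 'd::finite) set) \<subseteq> freq_ball N"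
proof
  fix n :: "int ^ 'd" assume "CARD('d) * m \<le> N" and "n \<in> freq_cube m"
  then have "freq_norm n \<le> real CARD('d) * real m" "real CARD('d) * real m \<le> real N"
    using freq_norm_le_if_mem_freq_cube by (auto simp flip: of_nat_mult)
  then show "n \<in> freq_ball N" unfolding freq_ball_def mem_Collect_eq by linarith
qed

lemma finite_freq_ball: "finite (freq_ball N)"
  using finite_subset[OF freq_ball_subset_freq_cube finite_freq_cube] .

lemma uminus_mem_freq_ball: "n \<in> freq_ball N \<Longrightarrow> - n \<in> freq_ball N"
  by (simp add: freq_ball_def)

lemma zero_mem_freq_ball: "0 \<in> freq_ball N"
  by (simp add: freq_ball_def)

lemma card_freq_ball_pos: "card (freq_ball N) > 0"
  using zero_mem_freq_ball finite_freq_ball card_gt_0_iff by blast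

lemma card_freq_ball_le:
  "N \<ge> 1 \<Longrightarrow> real (card (freq_ball N :: (int ^ 'd::finite) set)) \<le> (3 * real N) ^ CARD('d)"
proof -
  assume N: "N \<ge> 1"
  have "card (freq_ball N :: (int ^ 'd) set) \<le> (2 * N + 1) ^ CARD('d)"
    using card_mono[OF finite_freq_cube freq_ball_subset_freq_cube] by (simp add: card_freq_cube)
  then have "real (card (freq_ball N :: (int ^ 'd) set)) \<le> real ((2 * N + 1) ^ CARD('d))"
    by (simp only: of_nat_le_iff)
  also have "\<dots> = (2 * real N + 1) ^ CARD('d)" by (simp add: add.commute)
  also have "\<dots> \<le> (3 * real N) ^ CARD('d)" using N by (intro power_mono) auto
  finally show ?thesis .
qed

lemma card_freq_ball_ge:
  "real (card (freq_ball N :: (int ^ 'd::finite) set)) \<ge> (real N / real CARD('d)) ^ CARD('d)"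
proof -
  let ?d = "CARD('d)" and ?m = "N div CARD('d)"
  have "N = ?d * ?m + N mod ?d" by simp
  moreover have "N mod ?d < ?d" by simp
  ultimately have "N \<le> ?d * ?m + ?d" by linarith
  then have "N \<le> ?d * (2 * ?m + 1)" by (simp add: algebra_simps)
  then have "real N \<le> real ?d * real (2 * ?m + 1)"
    by (metis of_nat_le_iff of_nat_mult)
  then have "real N / real ?d \<le> real (2 * ?m + 1)"
    by (simp add: field_simps)
  then have "(real N / real ?d) ^ ?d \<le> real (2 * ?m + 1) ^ ?d"
    by (rule power_mono) simp
  also have "\<dots> = real (card (freq_cube ?m :: (int ^ 'd) set))"
    by (simp add: card_freq_cube)
  also have "\<dots> \<le> real (card (freq_ball N :: (int ^ 'd) set))"
    by (simp add: card_mono[OF finite_freq_ball freq_cube_subset_freq_ball])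
  finally show ?thesis .
qed

section \<open>Integration over the torus\<close>

lemma has_vector_derivative_cis_primitive:
  fixes m :: real
  assumes "m \<noteq> 0"
  shows "((\<lambda>t. complex_of_real (sin (m * t) / m) + \<i> * complex_of_real (- cos (m * t) / m))
    has_vector_derivative cis (m * t)) (at t within S)"
proof -
  have "((\<lambda>t. sin (m * t) / m) has_real_derivative cos (m * t)) (at t within S)"
    "((\<lambda>t. - cos (m * t) / m) has_real_derivative sin (m * t)) (at t within S)"
    using assms by (auto intro!: derivative_eq_intros)
  then have "((\<lambda>t. complex_of_real (sin (m * t) / m) + \<i> * complex_of_real (- cos (m * t) / m))
      has_vector_derivative (complex_of_real (cos (m * t)) + \<i> * complex_of_real (sin (m * t)))) (at t within S)"
    by (intro has_vector_derivative_add has_vector_derivative_mult_right has_vector_derivative_of_real)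
  moreover have "complex_of_real (cos (m * t)) + \<i> * complex_of_real (sin (m * t)) = cis (m * t)"
    by (simp add: complex_eq_iff)
  ultimately show ?thesis by simp
qed

lemma integral_cis_interval:
  fixes k :: int
  shows "integral\<^sup>L lborel (\<lambda>t. indicator {0..2*pi} t *\<^sub>R cis (real_of_int k * t))
    = (if k = 0 then complex_of_real (2*pi) else 0)"
proof -
  have "integral\<^sup>L lborel (\<lambda>t. indicator {0..2*pi} t *\<^sub>R cis (real_of_int k * t))
      = interval_lebesgue_integral lborel (ereal 0) (ereal (2*pi)) (\<lambda>t. cis (real_of_int k * t))"
    by (subst interval_integral_Icc) (simp_all add: set_lebesgue_integral_def)
  also have "\<dots> = (if k = 0 then complex_of_real (2*pi) else 0)"
  proof (cases "k = 0")
    case True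
    have "interval_lebesgue_integral lborel (ereal 0) (ereal (2*pi)) (\<lambda>t. 1)
        = complex_of_real (2*pi) - complex_of_real 0"
      by (rule interval_integral_FTC_finite)
        (auto intro!: continuous_intros has_vector_derivative_of_real[OF DERIV_ident, simplified])
    then show ?thesis using True by simp
  next
    case False
    define m where "m = real_of_int k"
    define F where "F = (\<lambda>t. complex_of_real (sin (m * t) / m) + \<i> * complex_of_real (- cos (m * t) / m))"
    have "m \<noteq> 0" using False by (simp add: m_def)
    note F' = has_vector_derivative_cis_primitive[OF this, folded F_def]
    have "interval_lebesgue_integral lborel (ereal 0) (ereal (2*pi)) (\<lambda>t. cis (m * t)) = F (2*pi) - F 0"
      by (rule interval_integral_FTC_finite) (auto intro!: continuous_intros F')
    also have "\<dots> = 0"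
    proof -
      have c: "cis (2*pi*m) = 1" unfolding m_def by (rule cis_multiple_2pi) simp
      have "sin (m * (2*pi)) = 0" "cos (m * (2*pi)) = 1"
        using arg_cong[OF c, of Im] arg_cong[OF c, of Re] by (simp_all add: mult.commute)
      then show ?thesis by (simp add: F_def)
    qed
    finally show ?thesis using False by (simp add: m_def)
  qed
  finally show ?thesis .
qed

lemma integral_lborel_prod_Basis:
  fixes F :: "'a::euclidean_space \<Rightarrow> real \<Rightarrow> complex"
  assumes int: "\<And>b. b \<in> Basis \<Longrightarrow> integrable lborel (F b)"
  shows "(\<integral>x. (\<Prod>b\<in>Basis. F b (x \<bullet> b)) \<partial>(lborel::'a measure)) = (\<Prod>b\<in>Basis. integral\<^sup>L lborel (F b))"
proof -
  interpret P: product_sigma_finite "\<lambda>_::'a. (lborel::real measure)"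
    by (simp add: product_sigma_finite_def lborel.sigma_finite_measure_axioms)
  have meas[measurable]: "F b \<in> borel_measurable borel" if "b \<in> Basis" for b
    using borel_measurable_integrable[OF int[OF that]] by simp
  let ?g = "\<lambda>x::'a. (\<Prod>b\<in>Basis. F b (x \<bullet> b))"
  have gm: "?g \<in> borel_measurable borel"
    by (intro borel_measurable_prod) (auto intro: measurable_compose[OF _ meas] borel_measurable_inner)
  have coord: "?g (\<Sum>b\<in>Basis. f b *\<^sub>R b) = (\<Prod>b\<in>Basis. F b (f b))" for f :: "'a \<Rightarrow> real"
  proof -
    have "(\<Sum>b'\<in>Basis. f b' *\<^sub>R b') \<bullet> b = f b" if "b \<in> Basis" for b
      using that by (simp add: inner_sum_left inner_Basis if_distrib sum.delta cong: if_cong)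
    then show ?thesis by (intro prod.cong) auto
  qed
  have "integral\<^sup>L (lborel::'a measure) ?g
     = integral\<^sup>L (distr (\<Pi>\<^sub>M b\<in>Basis. lborel) borel (\<lambda>f. \<Sum>b\<in>Basis. f b *\<^sub>R b)) ?g"
    by (rule arg_cong[where f="\<lambda>M. integral\<^sup>L M ?g"], rule lborel_eq)
  also have "\<dots> = (\<integral>f. (\<Prod>b\<in>Basis. F b (f b)) \<partial>(\<Pi>\<^sub>M b\<in>Basis. lborel))"
    by (subst integral_distr) (simp_all add: gm coord)
  also have "\<dots> = (\<Prod>b\<in>Basis. integral\<^sup>L lborel (F b))"
    by (rule P.product_integral_prod) (auto intro: int)
  finally show ?thesis .
qed

lemma integral_lborel_vec_prod:
  fixes f :: "'d::finite \<Rightarrow> real \<Rightarrow> complex"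
  assumes int: "\<And>i. integrable lborel (f i)"
  shows "(\<integral>x. (\<Prod>i\<in>UNIV. f i (x $ i)) \<partial>(lborel::(real^'d) measure)) = (\<Prod>i\<in>UNIV. integral\<^sup>L lborel (f i))"
proof -
  define F where "F b = f (SOME i. b = axis i (1::real))" for b :: "real ^ 'd"
  have Basis: "(Basis :: (real ^ 'd) set) = range (\<lambda>i. axis i 1)"
    by (auto simp: Basis_vec_def)
  have inj: "inj (\<lambda>i::'d. axis i (1::real))" by (auto simp: inj_on_def axis_eq_axis)
  have F_axis: "F (axis i 1) = f i" for i
    unfolding F_def by (rule arg_cong[of _ _ f], rule some_equality) (auto simp: axis_eq_axis)
  have integrand: "(\<Prod>i\<in>UNIV. f i (x $ i)) = (\<Prod>b\<in>Basis. F b (x \<bullet> b))" for x :: "real ^ 'd"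
    unfolding Basis by (subst prod.reindex[OF inj]) (simp add: F_axis inner_axis)
  have integral: "(\<Prod>i\<in>UNIV. integral\<^sup>L lborel (f i)) = (\<Prod>b\<in>(Basis::(real^'d) set). integral\<^sup>L lborel (F b))"
    unfolding Basis by (subst prod.reindex[OF inj]) (simp add: F_axis)
  have "integrable lborel (F b)" if "b \<in> (Basis :: (real^'d) set)" for b
    using that int unfolding Basis by (auto simp: F_axis)
  then show ?thesis unfolding integrand integral by (rule integral_lborel_prod_Basis)
qed

abbreviation torus_box :: "(real ^ 'd::finite) set" where
  "torus_box \<equiv> cbox 0 (\<chi> i. 2 * pi)"

lemma indicator_torus_box:
  "indicator torus_box x = (\<Prod>i\<in>UNIV. indicator {0..2*pi} (x $ i) :: real)"
  by (auto simp: indicator_def mem_box_cart prod_zero_iff)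

lemma cis_sum: "cis (\<Sum>i\<in>A. f i) = (\<Prod>i\<in>A. cis (f i))"
  by (induction A rule: infinite_finite_induct) (auto simp: cis_mult[symmetric])

lemma integral_torus_box_cis:
  fixes k :: "int ^ 'd::finite"
  shows "integral\<^sup>L lborel (\<lambda>x::real^'d. indicator torus_box x *\<^sub>R cis (pair_freq k x))
     = (if k = 0 then complex_of_real ((2*pi) ^ CARD('d)) else 0)"
proof -
  define f where "f = (\<lambda>i t. indicator {0..2*pi} t *\<^sub>R cis (real_of_int (k $ i) * t))"
  have "indicator torus_box x *\<^sub>R cis (pair_freq k x) = (\<Prod>i\<in>UNIV. f i (x $ i))" for x :: "real^'d"
    unfolding f_def indicator_torus_box pair_freq_def cis_sum scaleR_conv_of_real
    by (simp add: prod.distrib of_real_prod)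
  moreover have "integrable lborel (f i)" for i
    unfolding f_def by (intro borel_integrable_compact compact_Icc continuous_intros)
  ultimately have "integral\<^sup>L lborel (\<lambda>x::real^'d. indicator torus_box x *\<^sub>R cis (pair_freq k x))
      = (\<Prod>i\<in>UNIV. if k $ i = 0 then complex_of_real (2*pi) else 0)"
    using integral_lborel_vec_prod[of f] by (simp add: f_def integral_cis_interval)
  also have "\<dots> = (if k = 0 then complex_of_real ((2*pi) ^ CARD('d)) else 0)"
    by (auto simp: vec_eq_iff of_real_power prod_zero_iff)
  finally show ?thesis .
qed

definition box_integral :: "(real ^ 'd::finite \<Rightarrow> real) \<Rightarrow> real" where
  "box_integral f = integral\<^sup>L lborel (\<lambda>x. indicator torus_box x * f x)"

lemma torus_integral_eq_box_integral:
  fixes f :: "real ^ 'd::finite \<Rightarrow> real"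
  shows "torus_integral f = box_integral f / (2 * pi) ^ CARD('d)"
  unfolding torus_integral_def box_integral_def set_lebesgue_integral_def by simp

lemma integrable_torus_box:
  "continuous_on UNIV f \<Longrightarrow> integrable lborel (\<lambda>x::real^'d::finite. indicator torus_box x * (f x :: real))"
  using borel_integrable_compact[of "torus_box :: (real^'d) set" f] continuous_on_subset by auto

lemma box_integral_sum:
  fixes f :: "'i \<Rightarrow> real^'d::finite \<Rightarrow> real"
  assumes "\<And>i. i \<in> A \<Longrightarrow> continuous_on UNIV (f i)"
  shows "box_integral (\<lambda>x. \<Sum>i\<in>A. f i x) = (\<Sum>i\<in>A. box_integral (f i))"
  unfolding box_integral_def sum_distrib_left
  by (rule Bochner_Integration.integral_sum) (rule integrable_torus_box[OF assms])

lemma box_integral_add: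
  fixes f g :: "real^'d::finite \<Rightarrow> real"
  assumes "continuous_on UNIV f" "continuous_on UNIV g"
  shows "box_integral (\<lambda>x. f x + g x) = box_integral f + box_integral g"
  unfolding box_integral_def distrib_left
  by (rule Bochner_Integration.integral_add) (intro integrable_torus_box assms)+

lemma box_integral_diff:
  fixes f g :: "real^'d::finite \<Rightarrow> real"
  assumes "continuous_on UNIV f" "continuous_on UNIV g"
  shows "box_integral (\<lambda>x. f x - g x) = box_integral f - box_integral g"
  unfolding box_integral_def right_diff_distrib
  by (rule Bochner_Integration.integral_diff) (intro integrable_torus_box assms)+

lemma box_integral_cmult: "box_integral (\<lambda>x. c * f x) = c * box_integral f"
  unfolding box_integral_def by (simp add: mult.left_commute)

lemma box_integral_cos_sin:
  fixes k :: "int ^ 'd::finite"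
  shows "box_integral (\<lambda>x. cos (pair_freq k x)) = (if k = 0 then (2*pi) ^ CARD('d) else 0)"
    and "box_integral (\<lambda>x. sin (pair_freq k x)) = 0"
proof -
  have int: "complex_integrable lborel (\<lambda>x::real^'d. indicator torus_box x *\<^sub>R cis (pair_freq k x))"
    by (intro borel_integrable_compact compact_cbox continuous_intros)
  show "box_integral (\<lambda>x. cos (pair_freq k x)) = (if k = 0 then (2*pi) ^ CARD('d) else 0)"
    using integral_Re[OF int] unfolding box_integral_def integral_torus_box_cis by simp
  show "box_integral (\<lambda>x. sin (pair_freq k x)) = 0"
    using integral_Im[OF int] unfolding box_integral_def integral_torus_box_cis by simp
qed

lemma box_integral_const: "box_integral (\<lambda>x::real^'d::finite. c) = c * (2 * pi) ^ CARD('d)"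
  using box_integral_cmult[of c "\<lambda>x. cos (pair_freq (0::int^'d) x)"] box_integral_cos_sin(1)[of "0::int^'d"]
  by simp

section \<open>The truncated field in a real orthogonal basis\<close>

definition fourier_amp :: "int ^ 'd::finite \<Rightarrow> real" where
  "fourier_amp n = japanese n powr (- real CARD('d) / 2)"

definition hartley :: "int ^ 'd::finite \<Rightarrow> real ^ 'd \<Rightarrow> real" where
  "hartley n x = cos (pair_freq n x) - sin (pair_freq n x)"

lemma fourier_amp_pos: "fourier_amp n > 0"
  unfolding fourier_amp_def using japanese_pos[of n] by simp

lemma fourier_amp_uminus [simp]: "fourier_amp (- n) = fourier_amp n"
  unfolding fourier_amp_def by simp

lemma fourier_amp_zero [simp]: "fourier_amp 0 = 1"
  unfolding fourier_amp_def japanese_def by simp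

lemma fourier_amp_sq: "(fourier_amp (n :: int ^ 'd::finite))\<^sup>2 = japanese n powr (- real CARD('d))"
  unfolding fourier_amp_def using japanese_pos[of n]
  by (simp add: power2_eq_square powr_add[symmetric])

lemma sigmaN_eq_sum_fourier_amp_sq:
  "sigmaN TYPE('d::finite) N = (\<Sum>n\<in>(freq_ball N :: (int ^ 'd) set). (fourier_amp n)\<^sup>2)"
  unfolding sigmaN_def by (simp add: fourier_amp_sq)

lemma sigmaN_ge_1: "sigmaN TYPE('d::finite) N \<ge> 1"
  using member_le_sum[of 0 "freq_ball N :: (int ^ 'd) set" "\<lambda>n. (fourier_amp n)\<^sup>2"]
  by (simp add: sigmaN_eq_sum_fourier_amp_sq zero_mem_freq_ball finite_freq_ball)

lemma continuous_on_hartley [continuous_intros]: "continuous_on S (hartley n)"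
  unfolding hartley_def by (intro continuous_intros)

lemma box_integral_hartley_mult:
  fixes n m :: "int ^ 'd::finite"
  shows "box_integral (\<lambda>x. hartley n x * hartley m x) = (if n = m then (2 * pi) ^ CARD('d) else 0)"
proof -
  have "hartley n x * hartley m x = cos (pair_freq (n - m) x) - sin (pair_freq (n + m) x)" for x
    unfolding hartley_def pair_freq_diff pair_freq_add cos_diff sin_add by (simp add: algebra_simps)
  then have "box_integral (\<lambda>x. hartley n x * hartley m x)
      = box_integral (\<lambda>x. cos (pair_freq (n - m) x)) - box_integral (\<lambda>x. sin (pair_freq (n + m) x))"
    by (simp add: box_integral_diff continuous_intros)
  then show ?thesis by (simp add: box_integral_cos_sin)
qed

lemma box_integral_sum_hartley_sq:
  fixes B :: "(int ^ 'd::finite) set"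
  assumes "finite B"
  shows "box_integral (\<lambda>x. (\<Sum>n\<in>B. c n * hartley n x)\<^sup>2) = (2 * pi) ^ CARD('d) * (\<Sum>n\<in>B. (c n)\<^sup>2)"
proof -
  have "box_integral (\<lambda>x. (\<Sum>n\<in>B. c n * hartley n x)\<^sup>2)
      = box_integral (\<lambda>x. \<Sum>n\<in>B. \<Sum>m\<in>B. c n * c m * (hartley n x * hartley m x))"
    unfolding power2_eq_square sum_product by (simp add: algebra_simps)
  also have "\<dots> = (\<Sum>n\<in>B. \<Sum>m\<in>B. c n * c m * box_integral (\<lambda>x. hartley n x * hartley m x))"
    by (simp add: box_integral_sum box_integral_cmult continuous_intros)
  also have "\<dots> = (2 * pi) ^ CARD('d) * (\<Sum>n\<in>B. (c n)\<^sup>2)"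
    using assms
    by (simp add: box_integral_hartley_mult if_distrib sum.delta sum_distrib_left sum_distrib_right power2_eq_square
        mult.commute cong: if_cong)
  finally show ?thesis .
qed

lemma uN_eq_sum_hartley:
  "uN N \<xi> x = (\<Sum>n\<in>freq_ball N. fourier_amp n * \<xi> n * hartley n x)"
proof -
  let ?B = "freq_ball N :: (int ^ 'd) set" and ?t = "\<lambda>n. pair_freq n x"
  have summand: "Re (complex_of_real (fourier_amp n) * gcoef \<xi> n * e_n n x)
      = fourier_amp n / 2 * \<xi> n * (cos (?t n) - sin (?t n))
        + fourier_amp n / 2 * \<xi> (- n) * (cos (?t n) + sin (?t n))" for n
    unfolding e_n_def gcoef_def by (simp add: algebra_simps add_divide_distrib diff_divide_distrib)
  have "uN N \<xi> x = (\<Sum>n\<in>?B. Re (complex_of_real (fourier_amp n) * gcoef \<xi> n * e_n n x))"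
    unfolding uN_def fourier_amp_def by (simp add: Re_sum)
  also have "\<dots> = (\<Sum>n\<in>?B. fourier_amp n / 2 * \<xi> n * (cos (?t n) - sin (?t n)))
                + (\<Sum>n\<in>?B. fourier_amp n / 2 * \<xi> (- n) * (cos (?t n) + sin (?t n)))"
    unfolding summand by (simp add: sum.distrib)
  also have "(\<Sum>n\<in>?B. fourier_amp n / 2 * \<xi> (- n) * (cos (?t n) + sin (?t n)))
           = (\<Sum>n\<in>?B. fourier_amp n / 2 * \<xi> n * (cos (?t n) - sin (?t n)))"
    by (rule sum.reindex_bij_witness[of _ uminus uminus])
      (auto simp: uminus_mem_freq_ball pair_freq_uminus)
  finally show ?thesis unfolding hartley_def by (simp add: sum.distrib[symmetric] algebra_simps)
qed

lemma continuous_on_uN [continuous_intros]: "continuous_on S (uN N \<xi>)"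
  unfolding uN_eq_sum_hartley[abs_def] by (intro continuous_intros)

lemma box_integral_uN_sq:
  "box_integral (\<lambda>x. (uN N \<xi> x)\<^sup>2)
    = (2 * pi) ^ CARD('d) * (\<Sum>n\<in>(freq_ball N :: (int ^ 'd::finite) set). (fourier_amp n * \<xi> n)\<^sup>2)"
  unfolding uN_eq_sum_hartley by (rule box_integral_sum_hartley_sq[OF finite_freq_ball])

lemma torus_integral_wick2:
  "torus_integral (wick2 TYPE('d::finite) N \<xi>)
    = (\<Sum>n\<in>(freq_ball N :: (int ^ 'd) set). (fourier_amp n * \<xi> n)\<^sup>2) - sigmaN TYPE('d) N"
proof -
  have "box_integral (wick2 TYPE('d) N \<xi>)
      = box_integral (\<lambda>x. (uN N \<xi> x)\<^sup>2) - box_integral (\<lambda>x::real ^ 'd. sigmaN TYPE('d) N)"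
    unfolding wick2_def[abs_def] by (rule box_integral_diff) (intro continuous_intros)+
  then show ?thesis
    by (simp add: torus_integral_eq_box_integral box_integral_uN_sq box_integral_const field_simps)
qed

lemma torus_integral_wick4:
  "torus_integral (wick4 TYPE('d::finite) N \<xi>)
    = torus_integral (\<lambda>x :: real ^ 'd. (uN N \<xi> x) ^ 4)
      - 6 * sigmaN TYPE('d) N * (\<Sum>n\<in>(freq_ball N :: (int ^ 'd) set). (fourier_amp n * \<xi> n)\<^sup>2)
      + 3 * (sigmaN TYPE('d) N)\<^sup>2"
proof -
  let ?s = "sigmaN TYPE('d) N"
  have "box_integral (wick4 TYPE('d) N \<xi>)
      = box_integral (\<lambda>x::real ^ 'd. (uN N \<xi> x) ^ 4) - box_integral (\<lambda>x. 6 * ?s * (uN N \<xi> x)\<^sup>2)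
        + box_integral (\<lambda>x::real ^ 'd. 3 * ?s\<^sup>2)"
    unfolding wick4_def[abs_def]
    by (simp add: box_integral_add box_integral_diff continuous_intros)
  then show ?thesis
    by (simp add: torus_integral_eq_box_integral box_integral_cmult box_integral_uN_sq
        box_integral_const field_simps)
qed
definition small_box :: "nat \<Rightarrow> (real ^ 'd::finite) set" where
  "small_box N = cbox 0 (\<chi> i. 1 / (4 * real CARD('d) * real N))"

lemma abs_pair_freq_le_on_small_box:
  fixes n :: "int ^ 'd::finite"
  assumes n: "n \<in> freq_ball N" and x: "x \<in> small_box N" and N: "N \<ge> 1"
  shows "\<bar>pair_freq n x\<bar> \<le> 1/4"
proof -
  let ?d = "real CARD('d)"
  have x0: "0 \<le> x $ i" and x1: "x $ i \<le> 1 / (4 * ?d * real N)" for i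
    using x by (auto simp: small_box_def mem_box_cart)
  have ni: "\<bar>real_of_int (n $ i)\<bar> \<le> real N" for i
    using abs_component_le_freq_norm[of n i] n by (simp add: freq_ball_def)
  have "\<bar>pair_freq n x\<bar> \<le> (\<Sum>i\<in>UNIV. \<bar>real_of_int (n $ i) * x $ i\<bar>)"
    unfolding pair_freq_def by (rule sum_abs)
  also have "\<dots> = (\<Sum>i\<in>UNIV. \<bar>real_of_int (n $ i)\<bar> * x $ i)"
    using x0 by (simp add: abs_mult)
  also have "\<dots> \<le> (\<Sum>i\<in>(UNIV::'d set). real N * (1 / (4 * ?d * real N)))"
    by (intro sum_mono mult_mono ni x1 x0) simp_all
  also have "\<dots> = 1/4" using N by (simp add: field_simps)
  finally show ?thesis .
qed

lemma hartley_ge_half: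
  assumes "n \<in> freq_ball N" "x \<in> small_box N" "N \<ge> 1"
  shows "hartley n x \<ge> 1/2"
proof -
  define t where "t = pair_freq n x"
  have t: "\<bar>t\<bar> \<le> 1/4" unfolding t_def by (rule abs_pair_freq_le_on_small_box[OF assms])
  have "(sin (t/2))\<^sup>2 \<le> (t/2)\<^sup>2"
    using abs_sin_x_le_abs_x[of "t/2"] by (metis abs_ge_zero power2_abs power_mono)
  moreover have "(t/2)\<^sup>2 = t\<^sup>2 / 4" by (simp add: power_divide)
  moreover have "t\<^sup>2 \<le> (1/4)\<^sup>2" using t by (metis abs_ge_zero power2_abs power_mono)
  ultimately have "cos t \<ge> 1 - 1/32"
    using cos_double_sin[of "t/2"] by (simp add: power2_eq_square)
  moreover have "sin t \<le> 1/4" using abs_sin_x_le_abs_x[of t] t by linarith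
  ultimately show ?thesis unfolding hartley_def t_def[symmetric] by linarith
qed

lemma small_box_subset_torus_box: "N \<ge> 1 \<Longrightarrow> small_box N \<subseteq> (torus_box :: (real ^ 'd::finite) set)"
proof -
  assume N: "N \<ge> 1"
  have "1 \<le> real CARD('d)" "1 \<le> real N" using N by (simp_all add: Suc_le_eq)
  then have "1 \<le> real CARD('d) * real N" using mult_mono[of 1 "real CARD('d)" 1 "real N"] by simp
  then have "1 / (4 * real CARD('d) * real N) \<le> 1" by (simp add: field_simps)
  also have "1 \<le> 2 * pi" using pi_gt3 by linarith
  finally have "1 / (4 * real CARD('d) * real N) \<le> 2 * pi" .
  then show ?thesis unfolding small_box_def by (auto simp: mem_box_cart) (meson order_trans)
qed

lemma measure_small_box:
  assumes "N \<ge> 1"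
  shows "measure lborel (small_box N :: (real ^ 'd::finite) set)
    = (2 * pi) ^ CARD('d) * (1 / (8 * pi * real CARD('d) * real N)) ^ CARD('d)"
proof -
  have "(0 :: real ^ 'd) \<in> small_box N" using assms by (simp add: small_box_def mem_box_cart)
  then have "measure lborel (small_box N :: (real ^ 'd) set) = (1 / (4 * real CARD('d) * real N)) ^ CARD('d)"
    unfolding small_box_def by (subst content_cbox_cart) auto
  also have "1 / (4 * real CARD('d) * real N) = 2 * pi * (1 / (8 * pi * real CARD('d) * real N))"
    by (simp add: field_simps)
  finally show ?thesis by (simp only: power_mult_distrib)
qed

lemma torus_integral_uN_pow4_ge:
  fixes \<xi> :: "int ^ 'd::finite \<Rightarrow> real"
  assumes N: "N \<ge> 1" and nonneg: "\<And>n. n \<in> freq_ball N \<Longrightarrow> \<xi> n \<ge> 0"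
  defines "S \<equiv> \<Sum>n\<in>freq_ball N. fourier_amp n * \<xi> n"
  shows "torus_integral (\<lambda>x :: real ^ 'd. (uN N \<xi> x) ^ 4)
    \<ge> (1 / (8 * pi * real CARD('d) * real N)) ^ CARD('d) * (S / 2) ^ 4"
proof -
  have coeff_nonneg: "0 \<le> fourier_amp n * \<xi> n" if "n \<in> freq_ball N" for n
    using fourier_amp_pos[of n] nonneg[OF that] by simp
  have "S / 2 \<le> uN N \<xi> x" if x: "x \<in> small_box N" for x :: "real ^ 'd"
  proof -
    have "S / 2 = (\<Sum>n\<in>freq_ball N. fourier_amp n * \<xi> n * (1/2))"
      unfolding S_def by (simp add: sum_divide_distrib)
    also have "\<dots> \<le> (\<Sum>n\<in>freq_ball N. fourier_amp n * \<xi> n * hartley n x)"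
      by (intro sum_mono mult_left_mono hartley_ge_half[OF _ x N] coeff_nonneg)
    finally show ?thesis unfolding uN_eq_sum_hartley .
  qed
  moreover have "S \<ge> 0" unfolding S_def by (intro sum_nonneg coeff_nonneg)
  ultimately have pointwise: "indicator (small_box N) x * (S / 2) ^ 4 \<le> indicator torus_box x * (uN N \<xi> x) ^ 4"
    for x :: "real ^ 'd"
  proof (cases "x \<in> small_box N")
    case True
    then have "x \<in> torus_box" using small_box_subset_torus_box[OF N] by blast
    moreover have "(S / 2) ^ 4 \<le> (uN N \<xi> x) ^ 4"
      using True \<open>S \<ge> 0\<close> \<open>x \<in> small_box N \<Longrightarrow> S / 2 \<le> uN N \<xi> x\<close> by (intro power_mono) auto
    ultimately show ?thesis using True by simp
  qed (simp add: zero_le_even_power)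
  have "integrable lborel (\<lambda>x::real ^ 'd. indicator (small_box N) x * (S / 2) ^ 4)"
    using borel_integrable_compact[of "small_box N :: (real ^ 'd) set" "\<lambda>_. (S / 2) ^ 4"]
    by (simp add: small_box_def)
  moreover have "integrable lborel (\<lambda>x::real ^ 'd. indicator torus_box x * (uN N \<xi> x) ^ 4)"
    by (intro integrable_torus_box continuous_intros)
  ultimately have "integral\<^sup>L lborel (\<lambda>x::real ^ 'd. indicator (small_box N) x * (S / 2) ^ 4)
      \<le> box_integral (\<lambda>x :: real ^ 'd. (uN N \<xi> x) ^ 4)"
    unfolding box_integral_def using pointwise by (rule integral_mono)
  moreover have "integral\<^sup>L lborel (\<lambda>x::real ^ 'd. indicator (small_box N) x * (S / 2) ^ 4)
      = measure lborel (small_box N :: (real ^ 'd) set) * (S / 2) ^ 4"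
    by (simp add: integral_mult_left_zero)
  ultimately show ?thesis
    by (simp add: torus_integral_eq_box_integral measure_small_box[OF N] pos_le_divide_eq ac_simps)
qed

section \<open>Gaussian boxes\<close>

abbreviation std_gauss :: "real measure" where
  "std_gauss \<equiv> density lborel std_normal_density"

lemma gauss_space_box_eq_prod_emb:
  "{\<xi>. \<forall>n\<in>B. l n \<le> \<xi> n \<and> \<xi> n \<le> r n}
    = prod_emb UNIV (\<lambda>_. std_gauss) B (PiE B (\<lambda>n. {l n..r n}))"
  unfolding prod_emb_def by (auto simp: space_PiM PiE_iff)

lemma sets_gauss_space_box:
  "finite B \<Longrightarrow> {\<xi>. \<forall>n\<in>B. l n \<le> \<xi> n \<and> \<xi> n \<le> r n} \<in> sets (gauss_space :: (int ^ 'd::finite \<Rightarrow> real) measure)"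
  unfolding gauss_space_box_eq_prod_emb gauss_space_def by (rule sets_PiM_I) auto

lemma emeasure_gauss_space_box:
  "finite B \<Longrightarrow> emeasure (gauss_space :: (int ^ 'd::finite \<Rightarrow> real) measure) {\<xi>. \<forall>n\<in>B. l n \<le> \<xi> n \<and> \<xi> n \<le> r n}
    = (\<Prod>n\<in>B. emeasure std_gauss {l n..r n})"
  unfolding gauss_space_box_eq_prod_emb gauss_space_def
  by (rule emeasure_PiM_emb) (auto intro: prob_space_normal_density)

text \<open>The constant \<open>3\<close> absorbs \<open>(b + \<eta>)\<^sup>2 \<le> 2 b\<^sup>2 + 2\<close> and \<open>\<surd>(2\<pi>) \<le> e\<^sup>2\<close>.\<close>

lemma emeasure_std_gauss_interval_ge:
  assumes b: "b \<ge> 0" and \<eta>: "0 < \<eta>" "\<eta> \<le> 1"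
  shows "emeasure std_gauss {b..b+\<eta>} \<ge> ennreal (\<eta> * exp (- b\<^sup>2 - 3))"
proof -
  let ?c = "std_normal_density (b + \<eta>)"
  have density_ge: "std_normal_density t \<ge> ?c" if "t \<in> {b..b+\<eta>}" for t
  proof -
    have "t\<^sup>2 \<le> (b + \<eta>)\<^sup>2" using that b \<eta> by (intro power_mono) auto
    then show ?thesis unfolding std_normal_density_def by (intro mult_left_mono) auto
  qed
  have "sqrt (2 * pi) \<le> exp 2"
  proof -
    have "2 * pi \<le> 2 ^ 4" using pi_less_4 by simp
    also have "\<dots> \<le> exp 1 ^ 4"
      using exp_ge_add_one_self[of 1] by (intro power_mono) auto
    also have "\<dots> = (exp 2)\<^sup>2" by (simp flip: exp_of_nat_mult power_mult)
    finally show ?thesis by (metis real_sqrt_le_mono real_sqrt_abs abs_exp_cancel)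
  qed
  then have "exp (-2) \<le> 1 / sqrt (2 * pi)" by (simp add: exp_minus field_simps)
  moreover have "(b + \<eta>)\<^sup>2 \<le> 2 * b\<^sup>2 + 2"
    using \<eta> power_le_one[of \<eta> 2] sum_squares_ge_zero[of "b - \<eta>" 0]
    by (simp add: power2_eq_square algebra_simps)
  then have "exp (- b\<^sup>2 - 1) \<le> exp (- (b + \<eta>)\<^sup>2 / 2)" by simp
  ultimately have "exp (-2) * exp (- b\<^sup>2 - 1) \<le> 1 / sqrt (2 * pi) * exp (- (b + \<eta>)\<^sup>2 / 2)"
    by (intro mult_mono) auto
  moreover have "exp (-2) * exp (- b\<^sup>2 - 1) = exp (- b\<^sup>2 - 3)" by (simp flip: exp_add)
  ultimately have "exp (- b\<^sup>2 - 3) \<le> ?c" by (simp add: std_normal_density_def)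
  then have "\<eta> * exp (- b\<^sup>2 - 3) \<le> ?c * \<eta>"
    using mult_left_mono[of _ ?c \<eta>] \<eta> by (simp add: mult.commute)
  then have "ennreal (\<eta> * exp (- b\<^sup>2 - 3)) \<le> (\<integral>\<^sup>+x\<in>{b..b+\<eta>}. ennreal ?c \<partial>lborel)"
    using \<eta> by (subst nn_integral_cmult_indicator) (auto simp flip: ennreal_mult intro: ennreal_leI)
  also have "\<dots> \<le> (\<integral>\<^sup>+x\<in>{b..b+\<eta>}. ennreal (std_normal_density x) \<partial>lborel)"
    by (intro nn_integral_mono) (auto simp: density_ge split: split_indicator intro: ennreal_leI)
  also have "\<dots> = emeasure std_gauss {b..b+\<eta>}"
    by (rule emeasure_density[symmetric]) auto
  finally show ?thesis .
qed

lemma emeasure_gauss_space_box_ge: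
  fixes B :: "(int ^ 'd::finite) set"
  assumes B: "finite B" and b: "\<And>n. b n \<ge> 0" and \<eta>: "0 < \<eta>" "\<eta> \<le> 1"
  shows "emeasure (gauss_space :: (int ^ 'd \<Rightarrow> real) measure) {\<xi>. \<forall>n\<in>B. b n \<le> \<xi> n \<and> \<xi> n \<le> b n + \<eta>}
    \<ge> ennreal (exp (real (card B) * ln \<eta> - (\<Sum>n\<in>B. (b n)\<^sup>2) - 3 * real (card B)))"
proof -
  have "(\<Prod>n\<in>B. \<eta> * exp (- (b n)\<^sup>2 - 3)) = \<eta> ^ card B * exp (\<Sum>n\<in>B. - (b n)\<^sup>2 - 3)"
    by (simp add: prod.distrib exp_sum B)
  also have "\<eta> ^ card B = exp (real (card B) * ln \<eta>)"
    using \<eta> by (metis exp_ln exp_of_nat_mult)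
  also have "(\<Sum>n\<in>B. - (b n)\<^sup>2 - 3) = - (\<Sum>n\<in>B. (b n)\<^sup>2) - 3 * real (card B)"
    by (simp add: sum_subtractf sum_negf)
  finally have "exp (real (card B) * ln \<eta> - (\<Sum>n\<in>B. (b n)\<^sup>2) - 3 * real (card B))
      = (\<Prod>n\<in>B. \<eta> * exp (- (b n)\<^sup>2 - 3))"
    by (simp flip: exp_add)
  also have "ennreal \<dots> = (\<Prod>n\<in>B. ennreal (\<eta> * exp (- (b n)\<^sup>2 - 3)))"
    using \<eta> by (simp add: prod_ennreal)
  also have "\<dots> \<le> (\<Prod>n\<in>B. emeasure std_gauss {b n..b n + \<eta>})"
    by (intro prod_mono_ennreal emeasure_std_gauss_interval_ge b \<eta>)
  also have "\<dots> = emeasure gauss_space {\<xi>. \<forall>n\<in>B. b n \<le> \<xi> n \<and> \<xi> n \<le> b n + \<eta>}"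
    by (rule emeasure_gauss_space_box[OF B, symmetric])
  finally show ?thesis .
qed

section \<open>A lower bound for fixed truncation\<close>

lemma shifted_box_sum_sq_bounds:
  fixes a \<xi> :: "'i \<Rightarrow> real"
  assumes B: "finite B" and a: "\<And>n. n \<in> B \<Longrightarrow> a n > 0" and c: "c \<ge> 0"
    and \<sigma>: "\<sigma> = (\<Sum>n\<in>B. (a n)\<^sup>2)" "real (card B) * c\<^sup>2 = \<sigma>"
    and \<eta>: "0 < \<eta>" "\<eta> \<le> 1"
    and \<xi>: "\<And>n. n \<in> B \<Longrightarrow> c / a n \<le> \<xi> n \<and> \<xi> n \<le> c / a n + \<eta>"
  shows "\<And>n. n \<in> B \<Longrightarrow> c \<le> a n * \<xi> n"
    and "\<sigma> \<le> (\<Sum>n\<in>B. (a n * \<xi> n)\<^sup>2)"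
    and "(\<Sum>n\<in>B. (a n * \<xi> n)\<^sup>2) \<le> \<sigma> + 3 * \<eta> * \<sigma>"
proof -
  show lower: "c \<le> a n * \<xi> n" if n: "n \<in> B" for n
  proof -
    have "c = a n * (c / a n)" using a[OF n] by simp
    also have "\<dots> \<le> a n * \<xi> n" using \<xi>[OF n] a[OF n] by (intro mult_left_mono) auto
    finally show ?thesis .
  qed
  have "\<sigma> = (\<Sum>n\<in>B. c\<^sup>2)" using \<sigma>(2) by simp
  also have "\<dots> \<le> (\<Sum>n\<in>B. (a n * \<xi> n)\<^sup>2)"
    using lower c by (intro sum_mono power_mono) auto
  finally show "\<sigma> \<le> (\<Sum>n\<in>B. (a n * \<xi> n)\<^sup>2)" .
  have upper: "(a n * \<xi> n)\<^sup>2 \<le> c\<^sup>2 * (1 + \<eta>) + (a n)\<^sup>2 * (\<eta> + \<eta>\<^sup>2)" if n: "n \<in> B" for n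
  proof -
    have "a n * \<xi> n \<le> a n * (c / a n + \<eta>)" using \<xi>[OF n] a[OF n] by (intro mult_left_mono) auto
    also have "\<dots> = c + a n * \<eta>" using a[OF n] by (simp add: field_simps)
    finally have "(a n * \<xi> n)\<^sup>2 \<le> (c + a n * \<eta>)\<^sup>2"
      using lower[OF n] c by (intro power_mono) auto
    also have "\<dots> = c\<^sup>2 + \<eta> * (2 * c * a n) + (a n)\<^sup>2 * \<eta>\<^sup>2"
      by (simp add: power2_eq_square algebra_simps)
    also have "\<dots> \<le> c\<^sup>2 + \<eta> * (c\<^sup>2 + (a n)\<^sup>2) + (a n)\<^sup>2 * \<eta>\<^sup>2"
      using \<eta> sum_squares_ge_zero[of "c - a n" 0]
      by (intro add_mono mult_left_mono order_refl) (auto simp: power2_eq_square algebra_simps)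
    finally show ?thesis by (simp add: algebra_simps)
  qed
  have "(\<Sum>n\<in>B. (a n * \<xi> n)\<^sup>2) \<le> (\<Sum>n\<in>B. c\<^sup>2 * (1 + \<eta>) + (a n)\<^sup>2 * (\<eta> + \<eta>\<^sup>2))"
    using upper by (rule sum_mono)
  also have "\<dots> = \<sigma> + \<sigma> * (2 * \<eta> + \<eta>\<^sup>2)"
    using \<sigma> by (simp add: sum.distrib algebra_simps flip: sum_distrib_left sum_distrib_right)
  also have "\<dots> \<le> \<sigma> + \<sigma> * (3 * \<eta>)"
  proof -
    have "\<eta>\<^sup>2 \<le> \<eta>" using \<eta> by (simp add: power2_eq_square mult_left_le)
    moreover have "\<sigma> \<ge> 0" using \<sigma>(1) by (simp add: sum_nonneg)
    ultimately show ?thesis by (intro add_left_mono mult_left_mono) auto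
  qed
  finally show "(\<Sum>n\<in>B. (a n * \<xi> n)\<^sup>2) \<le> \<sigma> + 3 * \<eta> * \<sigma>" by (simp add: algebra_simps)
qed

lemma wick_bounds_on_shifted_box:
  fixes N :: nat and \<xi> :: "int ^ 'd::finite \<Rightarrow> real"
  defines "M \<equiv> real (card (freq_ball N :: (int ^ 'd) set))" and "\<sigma> \<equiv> sigmaN TYPE('d) N"
  assumes N: "N \<ge> 1" and \<eta>: "0 < \<eta>" "\<eta> \<le> 1" "3 * \<eta> * \<sigma> \<le> K"
    and \<xi>: "\<And>n. n \<in> freq_ball N \<Longrightarrow>
      sqrt (\<sigma> / M) / fourier_amp n \<le> \<xi> n \<and> \<xi> n \<le> sqrt (\<sigma> / M) / fourier_amp n + \<eta>"
  shows "\<bar>torus_integral (wick2 TYPE('d) N \<xi>)\<bar> \<le> K"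
    and "torus_integral (wick4 TYPE('d) N \<xi>)
      \<ge> (1 / (8 * pi * real CARD('d) * real N)) ^ CARD('d) * (M\<^sup>2 * \<sigma>\<^sup>2 / 16) - 6 * \<sigma> * (\<sigma> + K)"
proof -
  define c where "c = sqrt (\<sigma> / M)"
  define P where "P = (\<Sum>n\<in>(freq_ball N :: (int ^ 'd) set). (fourier_amp n * \<xi> n)\<^sup>2)"
  define S where "S = (\<Sum>n\<in>(freq_ball N :: (int ^ 'd) set). fourier_amp n * \<xi> n)"
  have "card (freq_ball N :: (int ^ 'd) set) > 0" by (rule card_freq_ball_pos)
  then have M: "M \<ge> 1" unfolding M_def by linarith
  have \<sigma>1: "\<sigma> \<ge> 1" unfolding \<sigma>_def by (rule sigmaN_ge_1)
  have c: "c \<ge> 0" "M * c\<^sup>2 = \<sigma>" using M \<sigma>1 by (auto simp: c_def)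
  have \<sigma>_sum: "\<sigma> = (\<Sum>n\<in>(freq_ball N :: (int ^ 'd) set). (fourier_amp n)\<^sup>2)"
    unfolding \<sigma>_def by (rule sigmaN_eq_sum_fourier_amp_sq)
  note bounds = shifted_box_sum_sq_bounds[OF finite_freq_ball fourier_amp_pos c(1)
      \<sigma>_sum c(2)[unfolded M_def] \<eta>(1,2) \<xi>[folded c_def]]
  show "\<bar>torus_integral (wick2 TYPE('d) N \<xi>)\<bar> \<le> K"
    using bounds(2,3) \<eta>(3) by (simp add: torus_integral_wick2 flip: \<sigma>_def)
  have "M * c \<le> S"
    using sum_mono[of "freq_ball N" "\<lambda>_. c", OF bounds(1)] unfolding S_def M_def by simp
  then have "(M * c / 2) ^ 4 \<le> (S / 2) ^ 4"
    using c M by (intro power_mono) auto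
  moreover have "(M * c / 2) ^ 4 = M\<^sup>2 * \<sigma>\<^sup>2 / 16"
    by (simp flip: c(2) add: power2_eq_square power4_eq_xxxx)
  ultimately have gain: "M\<^sup>2 * \<sigma>\<^sup>2 / 16 \<le> (S / 2) ^ 4" by simp
  have "\<xi> n \<ge> 0" if "n \<in> freq_ball N" for n
    using \<xi>[OF that] c(1) fourier_amp_pos[of n] unfolding c_def by (meson divide_nonneg_pos order_trans)
  then have "torus_integral (\<lambda>x :: real ^ 'd. (uN N \<xi> x) ^ 4)
      \<ge> (1 / (8 * pi * real CARD('d) * real N)) ^ CARD('d) * (S / 2) ^ 4"
    unfolding S_def by (rule torus_integral_uN_pow4_ge[OF N])
  moreover have "(1 / (8 * pi * real CARD('d) * real N)) ^ CARD('d) * (M\<^sup>2 * \<sigma>\<^sup>2 / 16)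
      \<le> (1 / (8 * pi * real CARD('d) * real N)) ^ CARD('d) * (S / 2) ^ 4"
    using gain by (rule mult_left_mono) simp
  moreover have "6 * \<sigma> * P \<le> 6 * \<sigma> * (\<sigma> + K)"
    using bounds(3) \<eta>(3) \<sigma>1 unfolding P_def by (intro mult_left_mono) auto
  moreover have "torus_integral (wick4 TYPE('d) N \<xi>)
      = torus_integral (\<lambda>x :: real ^ 'd. (uN N \<xi> x) ^ 4) - 6 * \<sigma> * P + 3 * \<sigma>\<^sup>2"
    unfolding P_def \<sigma>_def by (rule torus_integral_wick4)
  moreover have "\<sigma>\<^sup>2 \<ge> 0" by simp
  ultimately show "torus_integral (wick4 TYPE('d) N \<xi>)
      \<ge> (1 / (8 * pi * real CARD('d) * real N)) ^ CARD('d) * (M\<^sup>2 * \<sigma>\<^sup>2 / 16) - 6 * \<sigma> * (\<sigma> + K)"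
    by linarith
qed

lemma sum_sq_div_fourier_amp_le:
  assumes N: "N \<ge> 1"
  shows "(\<Sum>n\<in>(freq_ball N :: (int ^ 'd::finite) set). (c / fourier_amp n)\<^sup>2)
    \<le> real (card (freq_ball N :: (int ^ 'd) set)) * (c\<^sup>2 * (2 * real N) ^ CARD('d))"
proof (rule sum_bounded_above)
  fix n :: "int ^ 'd"
  assume "n \<in> freq_ball N"
  then have "japanese n \<le> 2 * real N"
    using japanese_le_1_plus_freq_norm[of n] N by (simp add: freq_ball_def)
  then have "japanese n powr real CARD('d) \<le> (2 * real N) powr real CARD('d)"
    using japanese_pos[of n] by (intro powr_mono2) auto
  then have "1 / (fourier_amp n)\<^sup>2 \<le> (2 * real N) ^ CARD('d)"
    using japanese_pos[of n] N by (simp add: fourier_amp_sq powr_minus divide_inverse powr_realpow)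
  then have "c\<^sup>2 * (1 / (fourier_amp n)\<^sup>2) \<le> c\<^sup>2 * (2 * real N) ^ CARD('d)"
    by (rule mult_left_mono) simp
  then show "(c / fourier_amp n)\<^sup>2 \<le> c\<^sup>2 * (2 * real N) ^ CARD('d)"
    by (simp add: power_divide)
qed

lemma nn_integral_wick_cutoff_ge:
  fixes s K :: real and N :: nat
  defines "M \<equiv> real (card (freq_ball N :: (int ^ 'd::finite) set))" and "\<sigma> \<equiv> sigmaN TYPE('d) N"
    and "\<eta> \<equiv> min 1 (K / (3 * sigmaN TYPE('d) N))"
  assumes N: "N \<ge> 1" and s: "s > 0" and K: "K > 0"
  shows "ennreal (exp (M * ln \<eta> - \<sigma> * (2 * real N) ^ CARD('d) - 3 * M
      + s / 4 * ((1 / (8 * pi * real CARD('d) * real N)) ^ CARD('d) * (M\<^sup>2 * \<sigma>\<^sup>2 / 16) - 6 * \<sigma> * (\<sigma> + K))))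
    \<le> (\<integral>\<^sup>+ \<xi>. indicator {\<xi>. \<bar>torus_integral (wick2 TYPE('d) N \<xi>)\<bar> \<le> K} \<xi>
          * ennreal (exp (RN s TYPE('d) N \<xi>)) \<partial>(gauss_space :: (int ^ 'd \<Rightarrow> real) measure))"
    (is "ennreal (exp (?P + ?L)) \<le> ?I")
proof -
  define c where "c = sqrt (\<sigma> / M)"
  define b where "b n = c / fourier_amp n" for n :: "int ^ 'd"
  define E where "E = {\<xi>. \<forall>n\<in>(freq_ball N :: (int ^ 'd) set). b n \<le> \<xi> n \<and> \<xi> n \<le> b n + \<eta>}"
  have \<sigma>1: "\<sigma> \<ge> 1" unfolding \<sigma>_def by (rule sigmaN_ge_1)
  have \<eta>: "0 < \<eta>" "\<eta> \<le> 1" "3 * \<eta> * \<sigma> \<le> K"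
    using K \<sigma>1 by (auto simp: \<eta>_def min_def field_simps simp flip: \<sigma>_def)
  have "card (freq_ball N :: (int ^ 'd) set) > 0" by (rule card_freq_ball_pos)
  then have c: "c \<ge> 0" "M * c\<^sup>2 = \<sigma>" using \<sigma>1 by (auto simp: c_def M_def)
  have on_E: "?L \<le> RN s TYPE('d) N \<xi> \<and> \<bar>torus_integral (wick2 TYPE('d) N \<xi>)\<bar> \<le> K" if "\<xi> \<in> E" for \<xi>
  proof -
    have "\<And>n. n \<in> freq_ball N \<Longrightarrow>
        sqrt (\<sigma> / M) / fourier_amp n \<le> \<xi> n \<and> \<xi> n \<le> sqrt (\<sigma> / M) / fourier_amp n + \<eta>"
      using that by (simp add: E_def b_def c_def)
    note wick = wick_bounds_on_shifted_box[OF N \<eta>[unfolded \<sigma>_def], of \<xi>, folded M_def \<sigma>_def, OF this]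
    show ?thesis
      using wick(2) s unfolding RN_def by (auto intro!: mult_left_mono wick(1))
  qed
  have "(\<Sum>n\<in>freq_ball N. (b n)\<^sup>2) \<le> \<sigma> * (2 * real N) ^ CARD('d)"
    using sum_sq_div_fourier_amp_le[OF N, of c, where 'd='d] c(2) unfolding b_def M_def by (metis mult.assoc)
  then have "ennreal (exp ?P)
      \<le> ennreal (exp (M * ln \<eta> - (\<Sum>n\<in>freq_ball N. (b n)\<^sup>2) - 3 * M))"
    by (intro ennreal_leI) simp
  also have "\<dots> \<le> emeasure gauss_space E"
    unfolding E_def M_def
    by (rule emeasure_gauss_space_box_ge[OF finite_freq_ball _ \<eta>(1,2)]) (auto simp: b_def intro!: divide_nonneg_pos c(1) fourier_amp_pos)
  finally have "ennreal (exp ?L) * ennreal (exp ?P) \<le> ennreal (exp ?L) * emeasure gauss_space E"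
    by (rule mult_left_mono) simp
  then have "ennreal (exp (?P + ?L)) \<le> ennreal (exp ?L) * emeasure gauss_space E"
    by (simp add: exp_add ennreal_mult ac_simps)
  also have "\<dots> = (\<integral>\<^sup>+ \<xi>. ennreal (exp ?L) * indicator E \<xi> \<partial>gauss_space)"
    by (rule nn_integral_cmult_indicator[symmetric]) (simp add: E_def sets_gauss_space_box finite_freq_ball)
  also have "\<dots> \<le> ?I"
    using on_E by (intro nn_integral_mono) (auto split: split_indicator intro: ennreal_leI)
  finally show ?thesis .
qed

section \<open>Growth of the variance and of the number of frequencies\<close>

lemma fourier_amp_sq_ge_on_freq_cube:
  assumes "n \<in> freq_cube m" "m \<ge> 1"
  shows "(fourier_amp (n :: int ^ 'd::finite))\<^sup>2 \<ge> 1 / (2 * real CARD('d) * real m) ^ CARD('d)"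
proof -
  have "1 \<le> real CARD('d) * real m"
    using assms(2) mult_mono[of 1 "real CARD('d)" 1 "real m"] by (simp add: Suc_le_eq)
  then have "japanese n \<le> 2 * real CARD('d) * real m"
    using japanese_le_1_plus_freq_norm[of n] freq_norm_le_if_mem_freq_cube[OF assms(1)] by linarith
  then have "(2 * real CARD('d) * real m) powr (- real CARD('d)) \<le> japanese n powr (- real CARD('d))"
    using japanese_pos[of n] by (intro powr_mono2') auto
  then show ?thesis
    using assms(2) by (simp add: fourier_amp_sq powr_minus powr_realpow divide_inverse)
qed

lemma card_freq_cube_shell_ge:
  assumes "m \<ge> 1"
  shows "real (card (freq_cube (2 * m) - freq_cube m :: (int ^ 'd::finite) set)) \<ge> (4 * real m) ^ CARD('d) / 4"
proof -
  let ?d = "CARD('d)" and ?a = "4 * real m + 1" and ?b = "2 * real m + 1"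
  have sub: "(freq_cube m :: (int ^ 'd) set) \<subseteq> freq_cube (2 * m)" by (rule freq_cube_mono) simp
  have "real (card (freq_cube (2 * m) - freq_cube m :: (int ^ 'd) set)) = ?a ^ ?d - ?b ^ ?d"
    using card_Diff_subset[OF finite_subset[OF sub finite_freq_cube] sub]
      card_mono[OF finite_freq_cube sub]
    by (simp add: card_freq_cube of_nat_diff add.commute)
  moreover have "?b ^ ?d \<le> (3/4) * ?a ^ ?d"
  proof -
    have "?b ^ ?d \<le> (3/4 * ?a) ^ ?d" using assms by (intro power_mono) auto
    also have "\<dots> = (3/4) ^ ?d * ?a ^ ?d" by (rule power_mult_distrib)
    also have "\<dots> \<le> (3/4) * ?a ^ ?d"
      using power_decreasing[of 1 ?d "3/4 :: real"] by (intro mult_right_mono) (auto simp: Suc_le_eq)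
    finally show ?thesis .
  qed
  moreover have "(4 * real m) ^ ?d \<le> ?a ^ ?d" by (intro power_mono) auto
  ultimately show ?thesis by linarith
qed

text \<open>Every dyadic shell of frequencies carries a fixed amount of variance, so \<open>\<sigma>\<^sub>N\<close> grows like \<open>log N\<close>.\<close>

lemma sum_fourier_amp_sq_freq_cube_double:
  assumes m: "m \<ge> 1"
  shows "(\<Sum>n\<in>(freq_cube (2 * m) :: (int ^ 'd::finite) set). (fourier_amp n)\<^sup>2)
    \<ge> (\<Sum>n\<in>(freq_cube m :: (int ^ 'd) set). (fourier_amp n)\<^sup>2) + 1 / (4 * real CARD('d) ^ CARD('d))"
proof -
  let ?d = "CARD('d)" and ?D = "freq_cube (2 * m) - freq_cube m :: (int ^ 'd) set"
  have sub: "(freq_cube m :: (int ^ 'd) set) \<subseteq> freq_cube (2 * m)" by (rule freq_cube_mono) simp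
  have "1 / (4 * real ?d ^ ?d) = (4 * real m) ^ ?d / 4 * (1 / (2 * real ?d * real (2 * m)) ^ ?d)"
    using m by (simp add: power_mult_distrib field_simps)
  also have "\<dots> \<le> real (card ?D) * (1 / (2 * real ?d * real (2 * m)) ^ ?d)"
    using card_freq_cube_shell_ge[OF m, where 'd='d] by (rule mult_right_mono) simp
  also have "\<dots> \<le> (\<Sum>n\<in>?D. (fourier_amp n)\<^sup>2)"
    using sum_bounded_below[of ?D "1 / (2 * real ?d * real (2 * m)) ^ ?d" "\<lambda>n. (fourier_amp n)\<^sup>2"]
      fourier_amp_sq_ge_on_freq_cube[of _ "2 * m"] m by auto
  finally show ?thesis
    using sum.subset_diff[OF sub finite_freq_cube, of "\<lambda>n. (fourier_amp n)\<^sup>2"] by linarith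
qed

lemma sum_fourier_amp_sq_freq_cube_pow2:
  "(\<Sum>n\<in>(freq_cube (2 ^ j) :: (int ^ 'd::finite) set). (fourier_amp n)\<^sup>2) \<ge> real j / (4 * real CARD('d) ^ CARD('d))"
proof (induction j)
  case 0
  show ?case by (simp add: sum_nonneg)
next
  case (Suc j)
  then show ?case
    using sum_fourier_amp_sq_freq_cube_double[of "2 ^ j", where 'd='d] by (simp add: add_divide_distrib)
qed

lemma sigmaN_at_top: "filterlim (sigmaN TYPE('d::finite)) at_top sequentially"
  unfolding filterlim_at_top eventually_sequentially
proof
  fix S :: real
  obtain j :: nat where j: "real j \<ge> S * (4 * real CARD('d) ^ CARD('d))"
    using real_arch_simple by blast
  have "S \<le> sigmaN TYPE('d) N" if "N \<ge> CARD('d) * 2 ^ j" for N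
  proof -
    have "S \<le> real j / (4 * real CARD('d) ^ CARD('d))" using j by (simp add: field_simps)
    also have "\<dots> \<le> (\<Sum>n\<in>(freq_cube (2 ^ j) :: (int ^ 'd) set). (fourier_amp n)\<^sup>2)"
      by (rule sum_fourier_amp_sq_freq_cube_pow2)
    also have "\<dots> \<le> sigmaN TYPE('d) N"
      unfolding sigmaN_eq_sum_fourier_amp_sq
      by (intro sum_mono2 finite_freq_ball freq_cube_subset_freq_ball that) simp
    finally show ?thesis .
  qed
  then show "\<exists>N0. \<forall>N\<ge>N0. S \<le> sigmaN TYPE('d) N" by blast
qed

lemma scaled_card_freq_ball_sq_ge:
  assumes N: "N \<ge> 1"
  shows "(1 / (8 * pi * real CARD('d) * real N)) ^ CARD('d) * (real (card (freq_ball N :: (int ^ 'd::finite) set)))\<^sup>2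
    \<ge> (1 / (8 * pi * real CARD('d) ^ 3)) ^ CARD('d) * real N ^ CARD('d)"
proof -
  let ?d = "CARD('d)" and ?V = "(1 / (8 * pi * real CARD('d) * real N)) ^ CARD('d)"
  have "1 / (8 * pi * real ?d ^ 3) * real N = 1 / (8 * pi * real ?d * real N) * (real N / real ?d)\<^sup>2"
    using N by (simp add: field_simps power2_eq_square power3_eq_cube)
  moreover have "((real N / real ?d)\<^sup>2) ^ ?d = ((real N / real ?d) ^ ?d)\<^sup>2"
    by (simp flip: power_mult add: mult.commute)
  ultimately have "(1 / (8 * pi * real ?d ^ 3)) ^ ?d * real N ^ ?d = ?V * ((real N / real ?d) ^ ?d)\<^sup>2"
    by (metis power_mult_distrib)
  also have "\<dots> \<le> ?V * (real (card (freq_ball N :: (int ^ 'd) set)))\<^sup>2"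
    by (intro mult_left_mono power_mono card_freq_ball_ge) auto
  finally show ?thesis .
qed

lemma ln_min_one_ge:
  fixes K \<sigma> :: real
  assumes "K > 0" "\<sigma> > 0"
  shows "ln (min 1 (K / (3 * \<sigma>))) \<ge> - 3 * \<sigma> / K"
proof (cases "K / (3 * \<sigma>) \<le> 1")
  case True
  have "ln (3 * \<sigma> / K) \<le> 3 * \<sigma> / K - 1" using assms by (intro ln_le_minus_one) simp
  with True assms show ?thesis by (simp add: ln_div)
qed (use assms in simp)

text \<open>With \<open>X = N\<^sup>d\<close>, the quartic gain \<open>\<ge> s \<gamma> X \<sigma>\<^sup>2 / 64\<close> beats the
  losses, which are linear in \<open>\<sigma>\<close> times \<open>X\<close> or independent of \<open>X\<close>, once \<open>\<sigma>\<close> and then \<open>X\<close> are large.\<close>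

lemma quartic_gain_dominates:
  fixes M X \<sigma> l V s K \<gamma> A B :: real
  assumes s: "s > 0" and K: "K > 0" and \<sigma>: "\<sigma> \<ge> 1" and X: "X \<ge> 0"
    and M: "0 \<le> M" "M \<le> B * X" and AB: "A \<ge> 0" "B \<ge> 0"
    and VM: "V * M\<^sup>2 \<ge> \<gamma> * X" and \<gamma>: "\<gamma> > 0"
    and l: "l \<ge> - 3 * \<sigma> / K" "l \<le> 0"
    and \<sigma>_large: "\<sigma> \<ge> (3 * B / K + A + 3 * B + 1) / (s * \<gamma> / 128)"
    and X_large: "X \<ge> (3 * s / 2) * (1 + K) / (s * \<gamma> / 128)"
  shows "M * l - \<sigma> * (A * X) - 3 * M + s / 4 * (V * (M\<^sup>2 * \<sigma>\<^sup>2 / 16) - 6 * \<sigma> * (\<sigma> + K)) \<ge> X"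
proof -
  define Q where "Q = s * \<gamma> / 128"
  have Q: "Q > 0" unfolding Q_def using s \<gamma> by simp
  have entropy: "M * l \<ge> - (3 * B / K) * (X * \<sigma>)"
  proof -
    have "(B * X) * l \<le> M * l" using M(2) l(2) by (rule mult_right_mono_neg)
    moreover have "(B * X) * (- 3 * \<sigma> / K) \<le> (B * X) * l"
      using l(1) AB X by (intro mult_left_mono) auto
    ultimately show ?thesis by (simp add: field_simps)
  qed
  have gain: "s / 4 * (V * (M\<^sup>2 * \<sigma>\<^sup>2 / 16)) \<ge> 2 * Q * X * \<sigma>\<^sup>2"
    using mult_left_mono[OF mult_right_mono[OF VM zero_le_power2[of \<sigma>]], of "s / 64"] s
    by (simp add: Q_def algebra_simps)
  have loss: "s / 4 * (6 * \<sigma> * (\<sigma> + K)) \<le> (3 * s / 2) * (1 + K) * \<sigma>\<^sup>2"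
  proof -
    have "K * \<sigma> \<le> K * \<sigma>\<^sup>2" using \<sigma> K by (intro mult_left_mono) (auto simp: power2_eq_square)
    then have "\<sigma>\<^sup>2 + K * \<sigma> \<le> (1 + K) * \<sigma>\<^sup>2" by (simp add: algebra_simps)
    then have "(3 * s / 2) * (\<sigma>\<^sup>2 + K * \<sigma>) \<le> (3 * s / 2) * ((1 + K) * \<sigma>\<^sup>2)"
      using s by (intro mult_left_mono) auto
    then show ?thesis by (simp add: algebra_simps power2_eq_square)
  qed
  have "Q * \<sigma>\<^sup>2 \<ge> (3 * B / K + A) * \<sigma> + 3 * B + 1"
  proof -
    have "\<sigma> * Q \<ge> 3 * B / K + A + 3 * B + 1" using \<sigma>_large Q by (simp add: Q_def field_simps)
    then have "\<sigma> * (\<sigma> * Q) \<ge> \<sigma> * (3 * B / K + A + 3 * B + 1)" using \<sigma> by (intro mult_left_mono) auto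
    moreover have "\<sigma> * (3 * B + 1) \<ge> 3 * B + 1" using \<sigma> AB by (simp add: mult_le_cancel_right1)
    ultimately show ?thesis by (simp add: power2_eq_square algebra_simps)
  qed
  then have "X * (Q * \<sigma>\<^sup>2) \<ge> X * ((3 * B / K + A) * \<sigma> + 3 * B + 1)" using X by (rule mult_left_mono)
  moreover have "(3 * s / 2) * (1 + K) * \<sigma>\<^sup>2 \<le> (X * Q) * \<sigma>\<^sup>2"
    using X_large Q by (intro mult_right_mono) (simp_all add: Q_def field_simps)
  ultimately show ?thesis
    using entropy gain loss M(2) by (simp add: algebra_simps)
qed

lemma eventually_exp_le_nn_integral_wick_cutoff:
  fixes s K :: real
  assumes s: "s > 0" and K: "K > 0"
  shows "\<forall>\<^sub>F N in sequentially. ennreal (exp (real N))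
    \<le> (\<integral>\<^sup>+ \<xi>. indicator {\<xi>. \<bar>torus_integral (wick2 TYPE('d::finite) N \<xi>)\<bar> \<le> K} \<xi>
          * ennreal (exp (RN s TYPE('d) N \<xi>)) \<partial>(gauss_space :: (int ^ 'd \<Rightarrow> real) measure))"
proof -
  let ?d = "CARD('d)"
  define \<gamma> where "\<gamma> = (1 / (8 * pi * real ?d ^ 3)) ^ ?d"
  have \<gamma>: "\<gamma> > 0" unfolding \<gamma>_def by simp
  have "\<forall>\<^sub>F N in sequentially. (3 * 3 ^ ?d / K + 2 ^ ?d + 3 * 3 ^ ?d + 1) / (s * \<gamma> / 128) \<le> sigmaN TYPE('d) N"
    using sigmaN_at_top[where 'd='d] unfolding filterlim_at_top by blast
  moreover have "\<forall>\<^sub>F N in sequentially. max 1 ((3 * s / 2) * (1 + K) / (s * \<gamma> / 128)) \<le> real N"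
    using filterlim_real_sequentially unfolding filterlim_at_top by blast
  ultimately show ?thesis
  proof eventually_elim
    case (elim N)
    define M where "M = real (card (freq_ball N :: (int ^ 'd) set))"
    define \<sigma> where "\<sigma> = sigmaN TYPE('d) N"
    have N: "N \<ge> 1" using elim(2) by simp
    have \<sigma>1: "\<sigma> \<ge> 1" unfolding \<sigma>_def by (rule sigmaN_ge_1)
    have "real N \<le> real N ^ ?d" using N by (simp add: self_le_power)
    moreover have "real N ^ ?d \<le> M * ln (min 1 (K / (3 * \<sigma>))) - \<sigma> * (2 ^ ?d * real N ^ ?d) - 3 * M
        + s / 4 * ((1 / (8 * pi * real ?d * real N)) ^ ?d * (M\<^sup>2 * \<sigma>\<^sup>2 / 16) - 6 * \<sigma> * (\<sigma> + K))"
    proof (rule quartic_gain_dominates[OF s K \<sigma>1 _ _ _ _ _ _ \<gamma> ln_min_one_ge[OF K]])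
      show "M \<le> 3 ^ ?d * real N ^ ?d"
        using card_freq_ball_le[OF N] by (simp add: M_def power_mult_distrib)
      show "(1 / (8 * pi * real ?d * real N)) ^ ?d * M\<^sup>2 \<ge> \<gamma> * real N ^ ?d"
        unfolding M_def \<gamma>_def by (rule scaled_card_freq_ball_sq_ge[OF N])
      show "ln (min 1 (K / (3 * \<sigma>))) \<le> 0" using K \<sigma>1 by simp
      show "(3 * 3 ^ ?d / K + 2 ^ ?d + 3 * 3 ^ ?d + 1) / (s * \<gamma> / 128) \<le> \<sigma>"
        using elim(1) by (simp add: \<sigma>_def)
      show "3 * s / 2 * (1 + K) / (s * \<gamma> / 128) \<le> real N ^ ?d"
        using elim(2) \<open>real N \<le> real N ^ ?d\<close> by linarith
    qed (use \<sigma>1 in \<open>auto simp: M_def\<close>)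
    ultimately have "real N \<le> M * ln (min 1 (K / (3 * \<sigma>))) - \<sigma> * (2 ^ ?d * real N ^ ?d) - 3 * M
        + s / 4 * ((1 / (8 * pi * real ?d * real N)) ^ ?d * (M\<^sup>2 * \<sigma>\<^sup>2 / 16) - 6 * \<sigma> * (\<sigma> + K))"
      by linarith
    then have "exp (real N) \<le> exp (M * ln (min 1 (K / (3 * \<sigma>))) - \<sigma> * (2 * real N) ^ ?d - 3 * M
        + s / 4 * ((1 / (8 * pi * real ?d * real N)) ^ ?d * (M\<^sup>2 * \<sigma>\<^sup>2 / 16) - 6 * \<sigma> * (\<sigma> + K)))"
      by (simp add: power_mult_distrib)
    then show ?case
      using nn_integral_wick_cutoff_ge[OF N s K, where 'd='d] unfolding M_def \<sigma>_def
      by (meson ennreal_leI order_trans)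
  qed
qed

lemma SUP_eq_top_if_eventually_ge:
  fixes f :: "nat \<Rightarrow> ennreal"
  assumes g: "filterlim g at_top sequentially" and f: "\<forall>\<^sub>F N in sequentially. ennreal (g N) \<le> f N"
  shows "(SUP N. f N) = \<top>"
  unfolding SUP_eq_top_iff
proof (intro allI impI)
  fix x :: ennreal
  assume "x < \<top>"
  then obtain r where r: "r \<ge> 0" "x = ennreal r" by (cases x) auto
  have "\<forall>\<^sub>F N in sequentially. x < f N"
    using f g[unfolded filterlim_at_top_dense, rule_format, of r]
  proof eventually_elim
    case (elim N)
    then have "ennreal r < ennreal (g N)" using r by (intro ennreal_lessI) auto
    then show ?case using elim r(2) by (simp add: less_le_trans)
  qed
  then show "\<exists>N\<in>UNIV. x < f N" by (auto dest: eventually_happens)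
qed

theorem theorem1p3:
  fixes \<sigma> K :: real
  assumes "\<sigma> > 0" and "K > 0"
  shows "(SUP N. \<integral>\<^sup>+ \<xi>. ennreal (exp (RN \<sigma> TYPE('d) N \<xi>)) \<partial>(gauss_space :: (int ^ 'd \<Rightarrow> real) measure))
         \<ge> (SUP N. \<integral>\<^sup>+ \<xi>. indicator {\<xi>. torus_integral (wick2 TYPE('d) N \<xi>) \<le> K} \<xi>
                   * ennreal (exp (RN \<sigma> TYPE('d) N \<xi>)) \<partial>(gauss_space :: (int ^ 'd \<Rightarrow> real) measure))
       \<and> (SUP N. \<integral>\<^sup>+ \<xi>. indicator {\<xi>. torus_integral (wick2 TYPE('d) N \<xi>) \<le> K} \<xi>
                   * ennreal (exp (RN \<sigma> TYPE('d) N \<xi>)) \<partial>(gauss_space :: (int ^ 'd \<Rightarrow> real) measure))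
         \<ge> (SUP N. \<integral>\<^sup>+ \<xi>. indicator {\<xi>. \<bar>torus_integral (wick2 TYPE('d) N \<xi>)\<bar> \<le> K} \<xi>
                   * ennreal (exp (RN \<sigma> TYPE('d) N \<xi>)) \<partial>(gauss_space :: (int ^ 'd \<Rightarrow> real) measure))
       \<and> (SUP N. \<integral>\<^sup>+ \<xi>. indicator {\<xi>. \<bar>torus_integral (wick2 TYPE('d) N \<xi>)\<bar> \<le> K} \<xi>
                   * ennreal (exp (RN \<sigma> TYPE('d) N \<xi>)) \<partial>(gauss_space :: (int ^ 'd \<Rightarrow> real) measure)) = \<infinity>"
proof (intro conjI)
  show "(SUP N. \<integral>\<^sup>+ \<xi>. indicator {\<xi>. \<bar>torus_integral (wick2 TYPE('d) N \<xi>)\<bar> \<le> K} \<xi>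
          * ennreal (exp (RN \<sigma> TYPE('d) N \<xi>)) \<partial>(gauss_space :: (int ^ 'd \<Rightarrow> real) measure)) = \<infinity>"
    using SUP_eq_top_if_eventually_ge[OF filterlim_compose[OF exp_at_top filterlim_real_sequentially]
        eventually_exp_le_nn_integral_wick_cutoff[OF assms]]
    by simp
qed (intro SUP_mono' nn_integral_mono; auto split: split_indicator)+

end
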